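(* Let $0<\alpha<1$, $b>0$, $c>0$ with $L=b+c<1$, and define for integers $\gamma\ge 1$ $$S_{inf}(\gamma)=\frac{1-\alpha^{\gamma+1}}{(1+\gamma L)(1-\alpha)}.$$ Let $$\gamma_0=\frac{1}{\ln\alpha}\left[W_{-1}\!\left(-\frac{1}{e}\,\alpha^{\frac{1}{L}-1}\right)+1\right]-\frac{1}{L},$$ where $W_{-1}$ is the $-1$ branch of the Lambert $W$ function (the inverse of $w\mapsto we^{w}$ on $(-\infty,-1]$). Then a maximizer $\gamma^*$ of $S_{inf}$ over integers $\gamma\ge 1$ satisfies: if $\gamma_0>1$, then $\gamma^*\in\{\lfloor\gamma_0\rfloor,\lceil\gamma_0\rceil\}$; otherwise $\gamma^*=1$.
   Context: $S_{inf}(\gamma)$ is the speedup ratio of distributed speculative decoding with draft length $\gamma$, acceptance rate $\alpha$, and $L$ the per-draft-token cost (SLM inference plus uplink transmission of the draft distribution) relative to one LLM run. Note that $L<1$ ensures the argument $-\frac1e\alpha^{1/L-1}$ lies in $(-1/e,0)$, where $W_{-1}$ is real-valued. *)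

theory Defs
  imports Complex_Main
begin

text \<open>The -1 branch of the Lambert W function: the inverse of w \<mapsto> w e^w on (-\<infinity>,-1].
  Meaningful for y in [-1/e, 0).\<close>
definition lambert_W_m1 :: "real \<Rightarrow> real" where
  "lambert_W_m1 y = (THE w. w \<le> -1 \<and> w * exp w = y)"

definition S_inf :: "real \<Rightarrow> real \<Rightarrow> nat \<Rightarrow> real" where
  "S_inf \<alpha> L \<gamma> = (1 - \<alpha> ^ (\<gamma> + 1)) / ((1 + real \<gamma> * L) * (1 - \<alpha>))"

definition gamma0 :: "real \<Rightarrow> real \<Rightarrow> real" where
  "gamma0 \<alpha> L = (1 / ln \<alpha>) * (lambert_W_m1 (- (1 / exp 1) * \<alpha> powr (1 / L - 1)) + 1) - 1 / L"

end

theory Submission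
  imports Defs "HOL-Real_Asymp.Real_Asymp"
begin

text \<open>Write a = ln \<alpha> and relax S_inf (up to the factor 1/(1 - \<alpha>)) to
  f x = (1 - exp ((x + 1) a)) / (1 + x L) for real x > -1/L. Then f' = N / (1 + x L)^2 with
  N x = exp ((x + 1) a) (L - a (1 + x L)) - L, which is strictly decreasing, positive at -1/L and
  tends to -L; so f increases up to the root x0 of N and decreases after it. Putting
  w = (x0 + 1/L) a - 1 \<le> -1, the equation N x0 = 0 becomes w exp w = -\<alpha> powr (1/L - 1) / e,
  hence x0 = gamma0 \<alpha> L. An integer maximiser of a function that is unimodal with peak x0
  on [1, \<infinity>) is a neighbour of x0, or 1 when x0 \<le> 1.\<close>

lemma mult_exp_strict_antimono:
  fixes u v :: real
  assumes "u < v" "v \<le> -1"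
  shows "v * exp v < u * exp u"
proof -
  have "(\<lambda>w. w * exp w) v < (\<lambda>w. w * exp w) u"
  proof (rule DERIV_neg_imp_decreasing_open[OF \<open>u < v\<close>])
    fix x assume "u < x" "x < v"
    then have "(1 + x) * exp x < 0"
      using assms by (simp add: mult_neg_pos)
    moreover have "DERIV (\<lambda>w. w * exp w) x :> (1 + x) * exp x"
      by (auto intro!: derivative_eq_intros simp: algebra_simps)
    ultimately show "\<exists>y. DERIV (\<lambda>w. w * exp w) x :> y \<and> y < 0"
      by blast
  qed (intro continuous_intros)
  then show ?thesis by simp
qed

lemma lambert_W_m1_eqI:
  assumes "w \<le> -1" "w * exp w = y"
  shows "lambert_W_m1 y = w"
  unfolding lambert_W_m1_def
proof (rule the_equality)
  fix v assume "v \<le> -1 \<and> v * exp v = y"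
  then show "v = w"
    using assms mult_exp_strict_antimono[of v w] mult_exp_strict_antimono[of w v]
    by (cases v w rule: linorder_cases) auto
qed (use assms in simp)

definition relaxed_speedup :: "real \<Rightarrow> real \<Rightarrow> real \<Rightarrow> real" where
  "relaxed_speedup a L x = (1 - exp ((x + 1) * a)) / (1 + x * L)"

definition relaxed_speedup_numer :: "real \<Rightarrow> real \<Rightarrow> real \<Rightarrow> real" where
  "relaxed_speedup_numer a L x = exp ((x + 1) * a) * (L - a * (1 + x * L)) - L"

lemma S_inf_eq_relaxed_speedup:
  assumes "0 < \<alpha>"
  shows "S_inf \<alpha> L n = relaxed_speedup (ln \<alpha>) L (real n) / (1 - \<alpha>)"
proof -
  have "exp (real (n + 1) * ln \<alpha>) = \<alpha> ^ (n + 1)"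
    using assms by (simp only: exp_of_nat_mult exp_ln)
  then have "exp ((real n + 1) * ln \<alpha>) = \<alpha> ^ (n + 1)"
    by (simp add: add.commute)
  then show ?thesis
    unfolding S_inf_def relaxed_speedup_def by (simp add: field_simps add.commute)
qed

lemma relaxed_speedup_denom_pos:
  fixes L x :: real
  assumes "0 < L" "-1/L < x"
  shows "0 < 1 + x * L"
  using assms by (simp add: field_simps)

lemma has_field_derivative_relaxed_speedup:
  assumes "1 + x * L \<noteq> 0"
  shows "DERIV (relaxed_speedup a L) x :> relaxed_speedup_numer a L x / (1 + x * L)\<^sup>2"
  unfolding relaxed_speedup_def relaxed_speedup_numer_def using assms
  by (auto intro!: derivative_eq_intros simp: algebra_simps power2_eq_square divide_simps)

lemma has_field_derivative_relaxed_speedup_numer: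
  "DERIV (relaxed_speedup_numer a L) x :> - (exp ((x + 1) * a) * a\<^sup>2 * (1 + x * L))"
  unfolding relaxed_speedup_numer_def
  by (auto intro!: derivative_eq_intros simp: algebra_simps power2_eq_square)

lemma relaxed_speedup_numer_strict_antimono:
  assumes "a < 0" "0 < L" "-1/L < u" "u < v"
  shows "relaxed_speedup_numer a L v < relaxed_speedup_numer a L u"
proof (rule DERIV_neg_imp_decreasing[OF \<open>u < v\<close>])
  fix x assume "u \<le> x" "x \<le> v"
  then have "0 < 1 + x * L"
    using assms by (intro relaxed_speedup_denom_pos) auto
  then have "- (exp ((x + 1) * a) * a\<^sup>2 * (1 + x * L)) < 0"
    using assms by simp
  then show "\<exists>y. DERIV (relaxed_speedup_numer a L) x :> y \<and> y < 0"
    using has_field_derivative_relaxed_speedup_numer by blast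
qed

lemma relaxed_speedup_numer_pole_pos:
  assumes "a < 0" "0 < L" "L < 1"
  shows "0 < relaxed_speedup_numer a L (-1/L)"
proof -
  have "0 < (-1/L + 1) * a"
    using assms by (simp add: mult_neg_neg field_simps)
  then have "L < L * exp ((-1/L + 1) * a)"
    using assms by simp
  then show ?thesis
    using assms unfolding relaxed_speedup_numer_def by (simp add: algebra_simps)
qed

lemma relaxed_speedup_numer_eventually_neg:
  assumes "a < 0" "0 < L"
  shows "\<forall>\<^sub>F x in at_top. relaxed_speedup_numer a L x < 0"
proof -
  have "(relaxed_speedup_numer a L \<longlongrightarrow> -L) at_top"
    unfolding relaxed_speedup_numer_def using \<open>a < 0\<close> by real_asymp
  then show ?thesis
    using \<open>0 < L\<close> by (auto elim: order_tendstoD)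
qed

lemma relaxed_speedup_numer_root_exists:
  assumes "a < 0" "0 < L" "L < 1"
  obtains x\<^sub>0 where "-1/L < x\<^sub>0" "relaxed_speedup_numer a L x\<^sub>0 = 0"
proof -
  obtain X where "\<forall>x\<ge>X. 0 \<le> x \<and> relaxed_speedup_numer a L x < 0"
    using eventually_conj[OF eventually_ge_at_top[of 0]
        relaxed_speedup_numer_eventually_neg[OF \<open>a < 0\<close> \<open>0 < L\<close>]]
    unfolding eventually_at_top_linorder by blast
  then have X: "0 \<le> X" "relaxed_speedup_numer a L X < 0"
    by auto
  have "-1/L \<le> X"
    using X \<open>0 < L\<close> by (simp add: order_trans[of _ 0])
  moreover have "continuous_on {-1/L..X} (relaxed_speedup_numer a L)"
    unfolding relaxed_speedup_numer_def by (intro continuous_intros)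
  ultimately obtain x where x: "-1/L \<le> x" "relaxed_speedup_numer a L x = 0"
    using IVT2'[of "relaxed_speedup_numer a L" X 0 "-1/L"] X(2)
      relaxed_speedup_numer_pole_pos[OF assms] by fastforce
  moreover have "x \<noteq> -1/L"
    using x relaxed_speedup_numer_pole_pos[OF assms] by auto
  ultimately show ?thesis
    using that by (metis order_le_neq_trans)
qed

lemma continuous_on_relaxed_speedup:
  assumes "0 < L" "-1/L < u"
  shows "continuous_on {u..v} (relaxed_speedup a L)"
proof -
  have "1 + x * L \<noteq> 0" if "x \<in> {u..v}" for x
    using relaxed_speedup_denom_pos[of L x] that assms by fastforce
  then show ?thesis
    unfolding relaxed_speedup_def by (intro continuous_intros) auto
qed

lemma relaxed_speedup_strict_mono_below_root:
  assumes "a < 0" "0 < L" "-1/L < u" "u < v" "v \<le> x\<^sub>0"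
    and "relaxed_speedup_numer a L x\<^sub>0 = 0"
  shows "relaxed_speedup a L u < relaxed_speedup a L v"
proof (rule DERIV_pos_imp_increasing_open[OF \<open>u < v\<close>])
  fix x assume "u < x" "x < v"
  then have "0 < 1 + x * L" "0 < relaxed_speedup_numer a L x"
    using assms relaxed_speedup_numer_strict_antimono[of a L x x\<^sub>0]
    by (auto intro: relaxed_speedup_denom_pos)
  then have "DERIV (relaxed_speedup a L) x :> relaxed_speedup_numer a L x / (1 + x * L)\<^sup>2"
    and "0 < relaxed_speedup_numer a L x / (1 + x * L)\<^sup>2"
    by (auto intro: has_field_derivative_relaxed_speedup)
  then show "\<exists>y. DERIV (relaxed_speedup a L) x :> y \<and> 0 < y"
    by blast
qed (use assms in \<open>simp add: continuous_on_relaxed_speedup\<close>)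

lemma relaxed_speedup_strict_antimono_above_root:
  assumes "a < 0" "0 < L" "-1/L < x\<^sub>0" "x\<^sub>0 \<le> u" "u < v"
    and "relaxed_speedup_numer a L x\<^sub>0 = 0"
  shows "relaxed_speedup a L v < relaxed_speedup a L u"
proof (rule DERIV_neg_imp_decreasing_open[OF \<open>u < v\<close>])
  fix x assume "u < x" "x < v"
  then have "0 < 1 + x * L" "relaxed_speedup_numer a L x < 0"
    using assms relaxed_speedup_numer_strict_antimono[of a L x\<^sub>0 x]
    by (auto intro: relaxed_speedup_denom_pos)
  then have "DERIV (relaxed_speedup a L) x :> relaxed_speedup_numer a L x / (1 + x * L)\<^sup>2"
    and "relaxed_speedup_numer a L x / (1 + x * L)\<^sup>2 < 0"
    by (auto intro: has_field_derivative_relaxed_speedup simp: divide_neg_pos)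
  then show "\<exists>y. DERIV (relaxed_speedup a L) x :> y \<and> y < 0"
    by blast
qed (use assms in \<open>simp add: continuous_on_relaxed_speedup\<close>)

lemma gamma0_eq_relaxed_speedup_numer_root:
  assumes "0 < \<alpha>" "\<alpha> < 1" "0 < L" "-1/L < x\<^sub>0"
    and root: "relaxed_speedup_numer (ln \<alpha>) L x\<^sub>0 = 0"
  shows "gamma0 \<alpha> L = x\<^sub>0"
proof -
  define a where "a = ln \<alpha>"
  define w where "w = (x\<^sub>0 + 1/L) * a - 1"
  have "a < 0"
    using assms by (simp add: a_def)
  moreover have "0 < x\<^sub>0 + 1/L"
    using assms by linarith
  ultimately have "w \<le> -1"
    unfolding w_def using mult_pos_neg[of "x\<^sub>0 + 1/L" a] by linarith
  have exp_w: "exp w = exp ((x\<^sub>0 + 1) * a) * exp ((1/L - 1) * a) / exp 1"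
    unfolding w_def by (simp flip: exp_add exp_diff add: algebra_simps)
  have w_eq: "w = - (L - a * (1 + x\<^sub>0 * L)) / L"
    using \<open>0 < L\<close> unfolding w_def by (simp add: field_simps)
  have "exp ((x\<^sub>0 + 1) * a) * (L - a * (1 + x\<^sub>0 * L)) = L"
    using root unfolding relaxed_speedup_numer_def a_def by simp
  moreover have "\<alpha> powr (1/L - 1) = exp ((1/L - 1) * a)"
    using assms by (simp add: powr_def a_def)
  moreover have "w * exp w
      = - (exp ((x\<^sub>0 + 1) * a) * (L - a * (1 + x\<^sub>0 * L))) / L * exp ((1/L - 1) * a) / exp 1"
    by (simp only: exp_w) (simp only: w_eq, simp add: field_simps)
  ultimately have "w * exp w = - (1 / exp 1) * \<alpha> powr (1/L - 1)"
    using \<open>0 < L\<close> by simp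
  then have "lambert_W_m1 (- (1 / exp 1) * \<alpha> powr (1/L - 1)) = w"
    using lambert_W_m1_eqI \<open>w \<le> -1\<close> by blast
  then show ?thesis
    using \<open>a < 0\<close> unfolding gamma0_def a_def[symmetric] w_def by (simp add: field_simps)
qed

lemma nat_maximizer_of_unimodal:
  fixes f :: "real \<Rightarrow> real" and p :: real and m :: nat
  assumes incr: "\<And>u v. 1 \<le> u \<Longrightarrow> u < v \<Longrightarrow> v \<le> p \<Longrightarrow> f u < f v"
    and decr: "\<And>u v. p \<le> u \<Longrightarrow> u < v \<Longrightarrow> f v < f u"
    and "1 \<le> m" and max: "\<And>n. 1 \<le> n \<Longrightarrow> f (real n) \<le> f (real m)"
  shows "(p > 1 \<longrightarrow> int m \<in> {\<lfloor>p\<rfloor>, \<lceil>p\<rceil>}) \<and> (\<not> p > 1 \<longrightarrow> m = 1)"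
proof (intro conjI impI)
  assume "p > 1"
  have "\<not> int m < \<lfloor>p\<rfloor>"
  proof
    assume "int m < \<lfloor>p\<rfloor>"
    then have "f (real m) < f (real (nat \<lfloor>p\<rfloor>))"
      using \<open>1 \<le> m\<close> by (intro incr) linarith+
    then show False
      using max[of "nat \<lfloor>p\<rfloor>"] \<open>p > 1\<close> by linarith
  qed
  moreover have "\<not> \<lceil>p\<rceil> < int m"
  proof
    assume "\<lceil>p\<rceil> < int m"
    then have "f (real m) < f (real (nat \<lceil>p\<rceil>))"
      using \<open>p > 1\<close> by (intro decr) linarith+
    then show False
      using max[of "nat \<lceil>p\<rceil>"] \<open>p > 1\<close> by linarith
  qed
  moreover have "\<lceil>p\<rceil> \<le> \<lfloor>p\<rfloor> + 1"
    by linarith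
  ultimately show "int m \<in> {\<lfloor>p\<rfloor>, \<lceil>p\<rceil>}"
    by auto
next
  assume "\<not> p > 1"
  show "m = 1"
  proof (rule ccontr)
    assume "m \<noteq> 1"
    then have "f (real m) < f 1"
      using \<open>1 \<le> m\<close> \<open>\<not> p > 1\<close> decr[of 1 "real m"] by simp
    then show False
      using max[of 1] by simp
  qed
qed

theorem theorem2:
  fixes \<alpha> b c L :: real and \<gamma>s :: nat
  assumes "0 < \<alpha>" "\<alpha> < 1" "0 < b" "0 < c" "L = b + c" "L < 1"
    and "\<gamma>s \<ge> 1"
    and "\<forall>\<gamma>::nat. \<gamma> \<ge> 1 \<longrightarrow> S_inf \<alpha> L \<gamma> \<le> S_inf \<alpha> L \<gamma>s"
  shows "(gamma0 \<alpha> L > 1 \<longrightarrow> int \<gamma>s \<in> {\<lfloor>gamma0 \<alpha> L\<rfloor>, \<lceil>gamma0 \<alpha> L\<rceil>})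
       \<and> (\<not> gamma0 \<alpha> L > 1 \<longrightarrow> \<gamma>s = 1)"
proof -
  have a: "ln \<alpha> < 0" and L: "0 < L" "L < 1"
    using assms by auto
  obtain x\<^sub>0 where x\<^sub>0: "-1/L < x\<^sub>0" "relaxed_speedup_numer (ln \<alpha>) L x\<^sub>0 = 0"
    using relaxed_speedup_numer_root_exists[OF a L] .
  have "-1/L < 1"
    using L by (simp add: order_less_trans[of _ 0])
  moreover have "relaxed_speedup (ln \<alpha>) L (real n) \<le> relaxed_speedup (ln \<alpha>) L (real \<gamma>s)"
    if "1 \<le> n" for n
    using assms(8) that \<open>\<alpha> < 1\<close>
    by (simp add: S_inf_eq_relaxed_speedup[OF \<open>0 < \<alpha>\<close>] divide_le_cancel)
  ultimately have "(x\<^sub>0 > 1 \<longrightarrow> int \<gamma>s \<in> {\<lfloor>x\<^sub>0\<rfloor>, \<lceil>x\<^sub>0\<rceil>}) \<and> (\<not> x\<^sub>0 > 1 \<longrightarrow> \<gamma>s = 1)"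
    using x\<^sub>0 \<open>\<gamma>s \<ge> 1\<close> a L
    by (intro nat_maximizer_of_unimodal[where f = "relaxed_speedup (ln \<alpha>) L"]
        relaxed_speedup_strict_mono_below_root relaxed_speedup_strict_antimono_above_root)
      auto
  moreover have "gamma0 \<alpha> L = x\<^sub>0"
    using gamma0_eq_relaxed_speedup_numer_root assms(1,2) L(1) x\<^sub>0 .
  ultimately show ?thesis
    by simp
qed

end
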